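(* Let $G$ be a primitive permutation group of type PA preserving a product structure $\Delta^I$, and let $H\le\mathrm{Sym}(\Delta)$ be such that $G\le H\wr\mathrm{Sym}(I)$ (in product action). If $G$ contains a quasi-semiregular element, then $H$ contains quasi-semiregular elements (on $\Delta$), and every quasi-semiregular element of prime order in $G$ lies in the base group $H^I$.
   Context: A permutation $g$ is quasi-semiregular if $\langle g\rangle$ has a unique fixed point and acts semiregularly (only the identity fixes a point) on the remaining points. Product action of $H\wr\mathrm{Sym}(I)$ on $\Delta^I$: the base group $H^I$ acts coordinatewise and $\mathrm{Sym}(I)$ permutes coordinates. *)

theory Defs
  imports "HOL-Algebra.Algebra"
begin

text \<open>Permutations of a set S are the extensional bijections of S (the carrier of
  BijGroup S).  A permutation group on S is a subgroup G of BijGroup S; as an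
  abstract group it is the structure below.\<close>

definition perm_grp :: "'a set \<Rightarrow> ('a \<Rightarrow> 'a) set \<Rightarrow> ('a \<Rightarrow> 'a) monoid" where
  "perm_grp S G = (BijGroup S)\<lparr>carrier := G\<rparr>"

definition quasi_semiregular :: "'a set \<Rightarrow> ('a \<Rightarrow> 'a) \<Rightarrow> bool" where
  "quasi_semiregular S g \<longleftrightarrow>
     (\<exists>a. (a \<in> S \<and> g a = a) \<and> (\<forall>b. b \<in> S \<and> g b = b \<longrightarrow> b = a)
        \<and> (\<forall>x\<in>S - {a}. \<forall>n::nat. (g ^^ n) x = x \<longrightarrow> (\<forall>y\<in>S. (g ^^ n) y = y)))"

definition transitive_on :: "'a set \<Rightarrow> ('a \<Rightarrow> 'a) set \<Rightarrow> bool" where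
  "transitive_on S G \<longleftrightarrow> S \<noteq> {} \<and> (\<forall>x\<in>S. \<forall>y\<in>S. \<exists>g\<in>G. g x = y)"

definition primitive_on :: "'a set \<Rightarrow> ('a \<Rightarrow> 'a) set \<Rightarrow> bool" where
  "primitive_on S G \<longleftrightarrow> transitive_on S G \<and>
     (\<forall>B. B \<subseteq> S \<and> B \<noteq> {} \<and> (\<forall>g\<in>G. g ` B = B \<or> g ` B \<inter> B = {})
          \<longrightarrow> card B = 1 \<or> B = S)"

definition regular_on :: "'a set \<Rightarrow> ('a \<Rightarrow> 'a) set \<Rightarrow> bool" where
  "regular_on S G \<longleftrightarrow> transitive_on S G \<and>
     (\<forall>g\<in>G. \<forall>x\<in>S. g x = x \<longrightarrow> g = (\<lambda>y\<in>S. y))"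

definition minimal_normal :: "('g, 'b) monoid_scheme \<Rightarrow> 'g set \<Rightarrow> bool" where
  "minimal_normal \<Gamma> N \<longleftrightarrow> N \<lhd> \<Gamma> \<and> N \<noteq> {\<one>\<^bsub>\<Gamma>\<^esub>} \<and>
     (\<forall>M. M \<lhd> \<Gamma> \<and> M \<subseteq> N \<longrightarrow> M = {\<one>\<^bsub>\<Gamma>\<^esub>} \<or> M = N)"

definition socle :: "('g, 'b) monoid_scheme \<Rightarrow> 'g set" where
  "socle \<Gamma> = generate \<Gamma> (\<Union>{N. minimal_normal \<Gamma> N})"

text \<open>Product action of H wr Sym(I) on \<Delta>^I (functions I \<rightarrow> \<Delta>, extensional):
  the element (h, \<sigma>) maps x to y with y (\<sigma> i) = h i (x i).\<close>

definition pa_perm :: "'i set \<Rightarrow> 'a set \<Rightarrow> ('i \<Rightarrow> 'a \<Rightarrow> 'a) \<Rightarrow> ('i \<Rightarrow> 'i)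
    \<Rightarrow> ('i \<Rightarrow> 'a) \<Rightarrow> ('i \<Rightarrow> 'a)" where
  "pa_perm I \<Delta> h \<sigma> = (\<lambda>x \<in> PiE I (\<lambda>_. \<Delta>).
      \<lambda>j \<in> I. h (inv_into I \<sigma> j) (x (inv_into I \<sigma> j)))"

definition wreath_pa :: "'i set \<Rightarrow> 'a set \<Rightarrow> ('a \<Rightarrow> 'a) set \<Rightarrow> (('i \<Rightarrow> 'a) \<Rightarrow> ('i \<Rightarrow> 'a)) set" where
  "wreath_pa I \<Delta> H = {pa_perm I \<Delta> h \<sigma> | h \<sigma>. (\<forall>i\<in>I. h i \<in> H) \<and> \<sigma> \<in> Bij I}"

definition base_group :: "'i set \<Rightarrow> 'a set \<Rightarrow> ('a \<Rightarrow> 'a) set \<Rightarrow> (('i \<Rightarrow> 'a) \<Rightarrow> ('i \<Rightarrow> 'a)) set" where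
  "base_group I \<Delta> H = {pa_perm I \<Delta> h (\<lambda>i\<in>I. i) | h. \<forall>i\<in>I. h i \<in> H}"

definition PA_type :: "'i set \<Rightarrow> 'a set \<Rightarrow> (('i \<Rightarrow> 'a) \<Rightarrow> ('i \<Rightarrow> 'a)) set \<Rightarrow> bool" where
  "PA_type I \<Delta> G \<longleftrightarrow> finite I \<and> finite \<Delta> \<and> card I \<ge> 2 \<and>
     subgroup G (BijGroup (PiE I (\<lambda>_. \<Delta>))) \<and> primitive_on (PiE I (\<lambda>_. \<Delta>)) G \<and>
     (\<exists>K T. subgroup K (BijGroup \<Delta>) \<and> primitive_on \<Delta> K \<and>
        socle (perm_grp \<Delta> K) = T \<and>
        simple_group (perm_grp \<Delta> T) \<and> \<not> comm_group (perm_grp \<Delta> T) \<and>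
        \<not> regular_on \<Delta> T \<and>
        G \<subseteq> wreath_pa I \<Delta> K \<and>
        socle (perm_grp (PiE I (\<lambda>_. \<Delta>)) G) = base_group I \<Delta> T)"

end

(*
  Write g = (h, \<sigma>) in H wr Sym(I), so that the \<sigma> j coordinate of g x is h j (x j).
  If the \<sigma>-cycle of i has length r, then g^r acts on the i-th coordinate by the cycle
  product k = h (\<sigma>^(r-1) i) \<circ> ... \<circ> h i, an element of H.  Let a be the unique fixed
  point of g.  Then g^n maps a(i := y) to a(\<sigma>^n i := (partial cycle product) y), so
  g^(r n) fixes a(i := x) iff k^n fixes x, and a fixed point y of k, spread along the
  cycle of i and completed by a elsewhere, is a fixed point of g, hence y = a i.
  Thus k is quasi-semiregular on \<Delta> with fixed point a i.

  If g has prime order p and \<sigma> moves i, then either \<sigma>^p moves i, and g^p = 1 applied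
  to a(i := y) gives y = a i; or the cycle of i has length p and k = 1, so every y is a
  fixed point of k and again y = a i.  Either way \<Delta> is a singleton and g = 1.
*)

theory Submission
  imports Defs "HOL-Combinatorics.Cycles"
begin

lemma carrier_BijGroup: "carrier (BijGroup S) = Bij S"
  by (simp add: BijGroup_def)

lemma one_BijGroup: "\<one>\<^bsub>BijGroup S\<^esub> = (\<lambda>x\<in>S. x)"
  by (simp add: BijGroup_def)

lemma mult_BijGroup: "f \<in> Bij S \<Longrightarrow> g \<in> Bij S \<Longrightarrow> f \<otimes>\<^bsub>BijGroup S\<^esub> g = compose S f g"
  by (simp add: BijGroup_def)

lemma funpow_Bij_mem:
  assumes "f \<in> Bij S" "x \<in> S"
  shows "(f ^^ n) x \<in> S"
  using Bij_imp_funcset[OF assms(1)] assms(2) by (induction n) auto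

lemma pow_BijGroup:
  assumes "f \<in> Bij S"
  shows "f [^]\<^bsub>BijGroup S\<^esub> (n::nat) = restrict (f ^^ n) S"
proof (induction n)
  case 0
  show ?case by (simp add: one_BijGroup)
next
  case (Suc n)
  interpret group "BijGroup S" by (rule group_BijGroup)
  have "f [^]\<^bsub>BijGroup S\<^esub> n \<in> Bij S"
    using nat_pow_closed[of f n] assms by (simp only: carrier_BijGroup)
  then have "f [^]\<^bsub>BijGroup S\<^esub> Suc n = compose S (restrict (f ^^ n) S) f"
    by (simp only: nat_pow_Suc mult_BijGroup[OF _ assms] Suc.IH[symmetric])
  also have "\<dots> = restrict (f ^^ Suc n) S"
    using Bij_imp_funcset[OF assms] unfolding compose_def
    by (intro restrict_ext) (auto simp: funpow_swap1)
  finally show ?case .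
qed

lemma funpow_ord_BijGroup:
  assumes "f \<in> Bij S" "x \<in> S"
  shows "(f ^^ group.ord (BijGroup S) f) x = x"
proof -
  interpret group "BijGroup S" by (rule group_BijGroup)
  have "restrict (f ^^ ord f) S = (\<lambda>x\<in>S. x)"
    using pow_ord_eq_1[of f] assms(1)
    by (simp only: pow_BijGroup[OF assms(1)] one_BijGroup carrier_BijGroup)
  then show ?thesis
    using assms(2) by (metis restrict_apply')
qed

lemma Bij_periodic:
  assumes "finite S" "f \<in> Bij S" "x \<in> S"
  obtains n where "0 < n" "(f ^^ n) x = x"
proof -
  interpret group "BijGroup S" by (rule group_BijGroup)
  have "Bij S \<subseteq> PiE S (\<lambda>_. S)"
    unfolding PiE_def using Bij_imp_extensional Bij_imp_funcset by blast
  then have "finite (Bij S)"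
    by (rule finite_subset) (simp add: assms(1) finite_PiE)
  then have "1 \<le> ord f"
    using ord_ge_1 assms(2) by (simp only: carrier_BijGroup)
  then show ?thesis
    using funpow_ord_BijGroup[OF assms(2,3)] by (intro that[of "ord f"]) auto
qed

lemma quasi_semiregularE:
  assumes "quasi_semiregular S f"
  obtains a where "a \<in> S" "f a = a" "\<And>b. b \<in> S \<Longrightarrow> f b = b \<Longrightarrow> b = a"
    "\<And>x n y. x \<in> S - {a} \<Longrightarrow> (f ^^ n) x = x \<Longrightarrow> y \<in> S \<Longrightarrow> (f ^^ n) y = y"
  using assms unfolding quasi_semiregular_def by blast

lemma quasi_semiregular_fixed_points:
  assumes "quasi_semiregular S f"
  obtains a where "{b \<in> S. f b = b} = {a}"
proof (rule quasi_semiregularE[OF assms])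
  fix a assume "a \<in> S" "f a = a" "\<And>b. b \<in> S \<Longrightarrow> f b = b \<Longrightarrow> b = a"
    "\<And>x n y. x \<in> S - {a} \<Longrightarrow> (f ^^ n) x = x \<Longrightarrow> y \<in> S \<Longrightarrow> (f ^^ n) y = y"
  then show thesis
    by (intro that[of a]) blast
qed

lemma quasi_semiregular_transfer:
  assumes "quasi_semiregular S f" and "\<And>n x. x \<in> S \<Longrightarrow> (f ^^ n) x = (f' ^^ n) x"
  shows "quasi_semiregular S f'"
proof -
  have f_eq: "f x = f' x" if "x \<in> S" for x
    using assms(2)[OF that, of 1] by simp
  obtain a where a: "a \<in> S" "f a = a" and uniq: "\<And>b. b \<in> S \<Longrightarrow> f b = b \<Longrightarrow> b = a"
    and semireg: "\<And>x n y. x \<in> S - {a} \<Longrightarrow> (f ^^ n) x = x \<Longrightarrow> y \<in> S \<Longrightarrow> (f ^^ n) y = y"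
    using quasi_semiregularE[OF assms(1)] by blast
  show ?thesis
    unfolding quasi_semiregular_def
  proof (intro exI conjI allI impI ballI)
    show "a \<in> S" "f' a = a"
      using a f_eq by auto
    show "b = a" if "b \<in> S \<and> f' b = b" for b
      using that uniq f_eq by auto
    show "(f' ^^ n) y = y" if "x \<in> S - {a}" "(f' ^^ n) x = x" "y \<in> S" for x n y
      using that semireg[of x n y] assms(2) by auto
  qed
qed

lemma quasi_semiregular_restrict:
  assumes "f \<in> S \<rightarrow> S" "quasi_semiregular S f"
  shows "quasi_semiregular S (restrict f S)"
proof (rule quasi_semiregular_transfer[OF assms(2)])
  fix n x assume "x \<in> S"
  then have "(restrict f S ^^ n) x = (f ^^ n) x \<and> (f ^^ n) x \<in> S"
    using assms(1) by (induction n) auto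
  then show "(f ^^ n) x = (restrict f S ^^ n) x" by simp
qed

lemma funpow_fixpoint: "f x = x \<Longrightarrow> (f ^^ n) x = x"
  by (induction n) auto

lemma funpow_eq_imp_mod_least_power_eq:
  assumes "(f ^^ n) x = x" "0 < n" "(f ^^ s) x = (f ^^ t) x"
  shows "s mod least_power f x = t mod least_power f x"
proof -
  let ?r = "least_power f x"
  have r: "(f ^^ ?r) x = x" "0 < ?r"
    using least_powerI[OF assms(1,2)] by auto
  have "(f ^^ m) x \<noteq> x" if "0 < m" "m < ?r" for m
    using least_power_le[where f = f and n = m and x = x] that by auto
  then have "inj_on (\<lambda>k. (f ^^ k) x) {0..<?r}"
    using r(1) by (intro inj_on_funpow_least)
  moreover have "(f ^^ (s mod ?r)) x = (f ^^ (t mod ?r)) x"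
    using assms(3) funpow_mod_eq[OF r(1)] by metis
  ultimately show ?thesis
    using r(2) by (auto dest: inj_onD)
qed

lemma Bij_funpow_preimage:
  assumes "f \<in> Bij A" "x \<in> A" "(f ^^ n) x = x" "0 < n" "y \<in> A" "f y = (f ^^ k) x"
  shows "y = (f ^^ (k + n - 1)) x"
proof -
  have "f y = (f ^^ (k + n)) x"
    using assms(3,6) by (simp add: funpow_add)
  also have "\<dots> = f ((f ^^ (k + n - 1)) x)"
    using assms(4) by (cases "k + n") auto
  finally have "f y = f ((f ^^ (k + n - 1)) x)" .
  moreover have "inj_on f A"
    using assms(1) by (simp add: Bij_def bij_betw_def)
  ultimately show ?thesis
    using assms(5) funpow_Bij_mem[OF assms(1,2)] inj_onD by metis
qed

(* Plain composition, so not extensional: the corresponding element of BijGroup \<Delta> is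
   restrict (cycle_prod h \<sigma> i n) \<Delta>. *)
primrec cycle_prod :: "('i \<Rightarrow> 'a \<Rightarrow> 'a) \<Rightarrow> ('i \<Rightarrow> 'i) \<Rightarrow> 'i \<Rightarrow> nat \<Rightarrow> 'a \<Rightarrow> 'a" where
  "cycle_prod h \<sigma> i 0 = id"
| "cycle_prod h \<sigma> i (Suc n) = h ((\<sigma> ^^ n) i) \<circ> cycle_prod h \<sigma> i n"

lemma cycle_prod_add:
  "cycle_prod h \<sigma> i (m + n) = cycle_prod h \<sigma> ((\<sigma> ^^ m) i) n \<circ> cycle_prod h \<sigma> i m"
  by (induction n) (simp_all add: funpow_add add.commute[of m])

lemma cycle_prod_mult:
  assumes "(\<sigma> ^^ r) i = i"
  shows "cycle_prod h \<sigma> i (r * n) = cycle_prod h \<sigma> i r ^^ n"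
proof (induction n)
  case (Suc n)
  have "(\<sigma> ^^ (r * n)) i = i"
    using funpow_mod_eq[where f = \<sigma> and n = r and x = i and m = "r * n"] assms by simp
  then show ?case
    using Suc cycle_prod_add[of h \<sigma> i "r * n" r] by (simp add: funpow_swap1 add.commute)
qed simp

lemma cycle_prod_mod:
  assumes "(\<sigma> ^^ r) i = i" "cycle_prod h \<sigma> i r y = y"
  shows "cycle_prod h \<sigma> i s y = cycle_prod h \<sigma> i (s mod r) y"
proof -
  have "(\<sigma> ^^ (r * (s div r))) i = i"
    using funpow_mod_eq[where f = \<sigma> and n = r and x = i and m = "r * (s div r)"] assms(1) by simp
  moreover have "cycle_prod h \<sigma> i (r * (s div r)) y = y"
    using assms cycle_prod_mult funpow_fixpoint by metis
  ultimately show ?thesis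
    using cycle_prod_add[of h \<sigma> i "r * (s div r)" "s mod r"] by simp
qed

lemma cycle_prod_funcset:
  assumes "\<And>n. h ((\<sigma> ^^ n) i) \<in> \<Delta> \<rightarrow> \<Delta>"
  shows "cycle_prod h \<sigma> i n \<in> \<Delta> \<rightarrow> \<Delta>"
  using assms by (induction n) (auto simp: Pi_iff)

lemma restrict_cycle_prod_in_subgroup:
  assumes "subgroup H (BijGroup \<Delta>)" "\<And>n. h ((\<sigma> ^^ n) i) \<in> H"
  shows "restrict (cycle_prod h \<sigma> i n) \<Delta> \<in> H"
proof (induction n)
  case 0
  show ?case
    using subgroup.one_closed[OF assms(1)] by (simp add: one_BijGroup restrict_def)
next
  case (Suc n)
  have "H \<subseteq> Bij \<Delta>"
    using subgroup.subset[OF assms(1)] by (simp only: carrier_BijGroup)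
  then have "h ((\<sigma> ^^ n) i) \<otimes>\<^bsub>BijGroup \<Delta>\<^esub> restrict (cycle_prod h \<sigma> i n) \<Delta>
      = compose \<Delta> (h ((\<sigma> ^^ n) i)) (restrict (cycle_prod h \<sigma> i n) \<Delta>)"
    using assms(2) Suc by (intro mult_BijGroup) blast+
  also have "\<dots> = restrict (cycle_prod h \<sigma> i (Suc n)) \<Delta>"
    unfolding compose_def by (intro restrict_ext) simp
  finally show ?case
    using subgroup.m_closed[OF assms(1) assms(2) Suc] by metis
qed

locale product_action =
  fixes I :: "'i set" and \<Delta> :: "'a set" and h :: "'i \<Rightarrow> 'a \<Rightarrow> 'a" and \<sigma> :: "'i \<Rightarrow> 'i"
  assumes perm: "\<sigma> \<in> Bij I" and maps: "\<And>i. i \<in> I \<Longrightarrow> h i \<in> \<Delta> \<rightarrow> \<Delta>"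
begin

abbreviation \<Omega> :: "('i \<Rightarrow> 'a) set" where "\<Omega> \<equiv> PiE I (\<lambda>_. \<Delta>)"

abbreviation g :: "('i \<Rightarrow> 'a) \<Rightarrow> ('i \<Rightarrow> 'a)" where "g \<equiv> pa_perm I \<Delta> h \<sigma>"

lemma perm_funpow_mem: "j \<in> I \<Longrightarrow> (\<sigma> ^^ n) j \<in> I"
  using funpow_Bij_mem[OF perm] .

lemma inj_on_perm_funpow: "inj_on (\<sigma> ^^ n) I"
  and perm_funpow_image: "(\<sigma> ^^ n) ` I = I"
  using bij_betw_funpow[of \<sigma> I n] perm by (auto simp: Bij_def bij_betw_def)

lemma pa_perm_apply:
  assumes "w \<in> \<Omega>" "j \<in> I"
  shows "g w (\<sigma> j) = h j (w j)"
proof -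
  have "inv_into I \<sigma> (\<sigma> j) = j"
    using inj_on_perm_funpow[of 1] assms(2) by (simp add: inv_into_f_f)
  then show ?thesis
    using assms perm_funpow_mem[of j 1] by (simp add: pa_perm_def)
qed

lemma pa_perm_mem: "w \<in> \<Omega> \<Longrightarrow> g w \<in> \<Omega>"
  using Bij_inv_into_mem[OF perm] maps by (auto simp: pa_perm_def PiE_iff Pi_iff)

lemma funpow_pa_perm_mem: "w \<in> \<Omega> \<Longrightarrow> (g ^^ n) w \<in> \<Omega>"
  by (induction n) (simp_all add: pa_perm_mem)

lemma funpow_pa_perm_apply:
  assumes "w \<in> \<Omega>" "j \<in> I"
  shows "(g ^^ n) w ((\<sigma> ^^ n) j) = cycle_prod h \<sigma> j n (w j)"
proof (induction n)
  case (Suc n)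
  have "(g ^^ Suc n) w ((\<sigma> ^^ Suc n) j) = g ((g ^^ n) w) (\<sigma> ((\<sigma> ^^ n) j))"
    by simp
  also have "\<dots> = h ((\<sigma> ^^ n) j) ((g ^^ n) w ((\<sigma> ^^ n) j))"
    using funpow_pa_perm_mem[OF assms(1)] perm_funpow_mem[OF assms(2)] by (rule pa_perm_apply)
  finally show ?case
    using Suc by simp
qed simp

lemma cycle_prod_mem: "i \<in> I \<Longrightarrow> cycle_prod h \<sigma> i n \<in> \<Delta> \<rightarrow> \<Delta>"
  using maps perm_funpow_mem by (intro cycle_prod_funcset) blast

lemma funpow_pa_perm_fun_upd:
  assumes "a \<in> \<Omega>" "g a = a" "i \<in> I" "y \<in> \<Delta>"
  shows "(g ^^ n) (a(i := y)) = a((\<sigma> ^^ n) i := cycle_prod h \<sigma> i n y)"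
proof (rule PiE_ext)
  have upd: "a(i := y) \<in> \<Omega>"
    using assms by (auto simp: PiE_iff extensional_def)
  then show "(g ^^ n) (a(i := y)) \<in> \<Omega>"
    by (rule funpow_pa_perm_mem)
  show "a((\<sigma> ^^ n) i := cycle_prod h \<sigma> i n y) \<in> \<Omega>"
    using assms perm_funpow_mem funcset_mem[OF cycle_prod_mem[OF assms(3)] assms(4)]
    by (auto simp: PiE_iff extensional_def)
  fix k assume "k \<in> I"
  then obtain j where j: "j \<in> I" "k = (\<sigma> ^^ n) j"
    using perm_funpow_image[of n] by blast
  show "(g ^^ n) (a(i := y)) k = (a((\<sigma> ^^ n) i := cycle_prod h \<sigma> i n y)) k"
  proof (cases "j = i")
    case False
    have "(\<sigma> ^^ n) j \<noteq> (\<sigma> ^^ n) i"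
      using False j(1) assms(3) inj_on_perm_funpow[of n] by (auto dest: inj_onD)
    moreover have "cycle_prod h \<sigma> j n (a j) = a ((\<sigma> ^^ n) j)"
      using funpow_pa_perm_apply[OF assms(1) j(1), of n] funpow_fixpoint[of g a n] assms(2) by simp
    ultimately show ?thesis
      using funpow_pa_perm_apply[OF upd j(1), of n] False j(2) by simp
  qed (use funpow_pa_perm_apply[OF upd j(1), of n] j(2) in simp)
qed

(* Independent of the exponent chosen by LEAST only if the full cycle product fixes y
   (orbit_extension_funpow). *)
definition orbit_extension :: "('i \<Rightarrow> 'a) \<Rightarrow> 'i \<Rightarrow> 'a \<Rightarrow> 'i \<Rightarrow> 'a" where
  "orbit_extension a i y = (\<lambda>j\<in>I.
     if j \<in> range (\<lambda>t. (\<sigma> ^^ t) i) then cycle_prod h \<sigma> i (LEAST t. (\<sigma> ^^ t) i = j) y else a j)"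

context
  fixes a i y m
  assumes a: "a \<in> \<Omega>" "g a = a" and i: "i \<in> I" and y: "y \<in> \<Delta>"
    and period: "(\<sigma> ^^ m) i = i" "0 < m"
    and cycle_fixed: "cycle_prod h \<sigma> i (least_power \<sigma> i) y = y"
begin

lemma orbit_extension_mem: "orbit_extension a i y \<in> \<Omega>"
  using a funcset_mem[OF cycle_prod_mem[OF i] y] by (auto simp: orbit_extension_def PiE_iff)

lemma orbit_extension_funpow: "orbit_extension a i y ((\<sigma> ^^ t) i) = cycle_prod h \<sigma> i t y"
proof -
  let ?r = "least_power \<sigma> i" and ?s = "LEAST s. (\<sigma> ^^ s) i = (\<sigma> ^^ t) i"
  have r: "(\<sigma> ^^ ?r) i = i"
    using least_powerI[OF period] by simp
  have "(\<sigma> ^^ ?s) i = (\<sigma> ^^ t) i"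
    by (rule LeastI) (rule refl)
  then have "?s mod ?r = t mod ?r"
    using funpow_eq_imp_mod_least_power_eq[OF period] by blast
  then have "cycle_prod h \<sigma> i ?s y = cycle_prod h \<sigma> i t y"
    using cycle_prod_mod[OF r cycle_fixed] by metis
  then show ?thesis
    using perm_funpow_mem[OF i] by (auto simp: orbit_extension_def)
qed

lemma orbit_extension_fixed: "g (orbit_extension a i y) = orbit_extension a i y"
proof (rule PiE_ext)
  let ?b = "orbit_extension a i y" and ?O = "range (\<lambda>t. (\<sigma> ^^ t) i)"
  show "g ?b \<in> \<Omega>" "?b \<in> \<Omega>"
    using orbit_extension_mem pa_perm_mem by auto
  fix k assume "k \<in> I"
  then obtain j where j: "j \<in> I" "k = \<sigma> j"
    using perm_funpow_image[of 1] by auto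
  have "?b (\<sigma> j) = h j (?b j)"
  proof (cases "j \<in> ?O")
    case True
    then obtain t where "j = (\<sigma> ^^ t) i" by blast
    then show ?thesis
      using orbit_extension_funpow[of t] orbit_extension_funpow[of "Suc t"] by simp
  next
    case False
    have "\<sigma> j \<notin> ?O"
    proof
      assume "\<sigma> j \<in> ?O"
      then obtain t where "\<sigma> j = (\<sigma> ^^ t) i" by blast
      then have "j = (\<sigma> ^^ (t + m - 1)) i"
        using Bij_funpow_preimage[OF perm i period j(1)] by blast
      with False show False by blast
    qed
    then have "?b (\<sigma> j) = g a (\<sigma> j)"
      using a(2) perm_funpow_mem[OF j(1), of 1] by (simp add: orbit_extension_def)
    also have "\<dots> = h j (?b j)"
      using pa_perm_apply[OF a(1) j(1)] False j(1) by (simp add: orbit_extension_def)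
    finally show ?thesis .
  qed
  then show "g ?b k = ?b k"
    using pa_perm_apply[OF orbit_extension_mem j(1)] j(2) by simp
qed

end

lemma cycle_prod_fixed_point_eq:
  assumes fixed: "{b \<in> \<Omega>. g b = b} = {a}" and i: "i \<in> I"
    and period: "(\<sigma> ^^ m) i = i" "0 < m"
    and y: "y \<in> \<Delta>" "cycle_prod h \<sigma> i (least_power \<sigma> i) y = y"
  shows "y = a i"
proof -
  have a: "a \<in> \<Omega>" "g a = a"
    using fixed by auto
  have "orbit_extension a i y = a"
    using orbit_extension_mem[OF a i y(1) period y(2)] orbit_extension_fixed[OF a i y(1) period y(2)]
      fixed by blast
  then show ?thesis
    using orbit_extension_funpow[OF a i y(1) period y(2), of 0] by simp
qed

lemma quasi_semiregular_cycle_prod: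
  assumes qs: "quasi_semiregular \<Omega> g" and i: "i \<in> I"
    and period: "(\<sigma> ^^ m) i = i" "0 < m"
  shows "quasi_semiregular \<Delta> (cycle_prod h \<sigma> i (least_power \<sigma> i))"
proof -
  let ?r = "least_power \<sigma> i"
  let ?k = "cycle_prod h \<sigma> i ?r"
  obtain a where a: "a \<in> \<Omega>" "g a = a" and uniq: "\<And>b. b \<in> \<Omega> \<Longrightarrow> g b = b \<Longrightarrow> b = a"
    and semireg: "\<And>w n v. w \<in> \<Omega> - {a} \<Longrightarrow> (g ^^ n) w = w \<Longrightarrow> v \<in> \<Omega> \<Longrightarrow> (g ^^ n) v = v"
    using quasi_semiregularE[OF qs] by blast
  have fixed: "{b \<in> \<Omega>. g b = b} = {a}"
    using a by (blast intro: uniq)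
  have r: "(\<sigma> ^^ ?r) i = i"
    using least_powerI[OF period] by simp
  have upd: "a(i := z) \<in> \<Omega>" if "z \<in> \<Delta>" for z
    using a(1) i that by (auto simp: PiE_iff extensional_def)
  have shift: "(g ^^ (?r * n)) (a(i := z)) = a(i := (?k ^^ n) z)" if "z \<in> \<Delta>" for z n
  proof -
    have "(\<sigma> ^^ (?r * n)) i = i"
      using funpow_mod_eq[where f = \<sigma> and n = ?r and x = i and m = "?r * n"] r by simp
    then show ?thesis
      using funpow_pa_perm_fun_upd[OF a i that, of "?r * n"] by (simp add: cycle_prod_mult[OF r, of h n])
  qed
  show ?thesis
    unfolding quasi_semiregular_def
  proof (intro exI[of _ "a i"] conjI allI impI ballI)
    show "a i \<in> \<Delta>"
      using a(1) i by auto
    show "?k (a i) = a i"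
      using funpow_pa_perm_apply[OF a(1) i, of ?r] r funpow_fixpoint[of g a] a(2) by simp
    show "b = a i" if "b \<in> \<Delta> \<and> ?k b = b" for b
      using cycle_prod_fixed_point_eq[OF fixed i period] that by blast
    fix x n y assume x: "x \<in> \<Delta> - {a i}" and kx: "(?k ^^ n) x = x" and y: "y \<in> \<Delta>"
    have "a(i := x) \<in> \<Omega> - {a}"
      using upd x by (auto dest: fun_cong[where x = i])
    moreover have "(g ^^ (?r * n)) (a(i := x)) = a(i := x)"
      using shift x kx by simp
    ultimately have "(g ^^ (?r * n)) (a(i := y)) = a(i := y)"
      using semireg upd[OF y] by blast
    then show "(?k ^^ n) y = y"
      using shift[OF y, of n] by (metis fun_upd_same)
  qed
qed

lemma prime_order_coordinate_eq:
  assumes fixed: "{b \<in> \<Omega>. g b = b} = {a}"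
    and p: "Factorial_Ring.prime p" and gp: "\<forall>w\<in>\<Omega>. (g ^^ p) w = w"
    and i: "i \<in> I" "\<sigma> i \<noteq> i" and y: "y \<in> \<Delta>"
  shows "y = a i"
proof -
  have a: "a \<in> \<Omega>" "g a = a"
    using fixed by auto
  have "a(i := y) \<in> \<Omega>"
    using a(1) i(1) y by (auto simp: PiE_iff extensional_def)
  then have p_upd: "a(i := y) = a((\<sigma> ^^ p) i := cycle_prod h \<sigma> i p y)"
    using funpow_pa_perm_fun_upd[OF a i(1) y, of p] gp by simp
  show ?thesis
  proof (cases "(\<sigma> ^^ p) i = i")
    case False
    then show ?thesis
      using fun_cong[OF p_upd, of i] by simp
  next
    case True
    have p0: "0 < p"
      using p by (rule prime_gt_0_nat)
    have "least_power \<sigma> i \<noteq> 1"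
      using least_powerI[OF True p0] i(2) by auto
    then have "least_power \<sigma> i = p"
      using least_power_minimal[OF True] p by (auto simp: prime_nat_iff)
    moreover have "cycle_prod h \<sigma> i p y = y"
      using fun_cong[OF p_upd, of i] True by simp
    ultimately show ?thesis
      using cycle_prod_fixed_point_eq[OF fixed i(1) True p0 y] by simp
  qed
qed

lemma prime_order_perm_eq_id:
  assumes fixed: "{b \<in> \<Omega>. g b = b} = {a}"
    and p: "Factorial_Ring.prime p" and gp: "\<forall>w\<in>\<Omega>. (g ^^ p) w = w"
    and nontrivial: "g \<noteq> (\<lambda>w\<in>\<Omega>. w)"
  shows "\<sigma> = (\<lambda>i\<in>I. i)"
proof -
  have a: "a \<in> \<Omega>" "g a = a"
    using fixed by auto
  have "\<sigma> i = i" if i: "i \<in> I" for i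
  proof (rule ccontr)
    assume "\<sigma> i \<noteq> i"
    then have \<Delta>: "\<Delta> = {a i}"
      using prime_order_coordinate_eq[OF fixed p gp i] a(1) i by blast
    have "g w = (\<lambda>w\<in>\<Omega>. w) w" for w
    proof (cases "w \<in> \<Omega>")
      case True
      then have "w = a"
        using a(1) by (intro PiE_ext[of w I "\<lambda>_. \<Delta>"]) (auto simp: PiE_iff \<Delta>)
      then show ?thesis
        using a by simp
    qed (simp add: pa_perm_def)
    with nontrivial show False
      by blast
  qed
  then show ?thesis
    using Bij_imp_extensional[OF perm] by (intro extensionalityI[where A = I]) auto
qed

end

lemma wreath_paE:
  assumes "g \<in> wreath_pa I \<Delta> H" "H \<subseteq> Bij \<Delta>"
  obtains h \<sigma> where "g = pa_perm I \<Delta> h \<sigma>" "\<forall>i\<in>I. h i \<in> H" "product_action I \<Delta> h \<sigma>"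
proof -
  obtain h \<sigma> where g: "g = pa_perm I \<Delta> h \<sigma>" "\<forall>i\<in>I. h i \<in> H" "\<sigma> \<in> Bij I"
    using assms(1) unfolding wreath_pa_def by blast
  moreover have "product_action I \<Delta> h \<sigma>"
    using g(2,3) assms(2) Bij_imp_funcset by unfold_locales blast+
  ultimately show ?thesis
    using that by blast
qed

lemma wreath_pa_quasi_semiregular_imp_ex_quasi_semiregular:
  assumes "finite I" "I \<noteq> {}" "subgroup H (BijGroup \<Delta>)"
    and "g \<in> wreath_pa I \<Delta> H" "quasi_semiregular (PiE I (\<lambda>_. \<Delta>)) g"
  shows "\<exists>k\<in>H. quasi_semiregular \<Delta> k"
proof -
  have "H \<subseteq> Bij \<Delta>"
    using subgroup.subset[OF assms(3)] by (simp only: carrier_BijGroup)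
  then obtain h \<sigma> where g: "g = pa_perm I \<Delta> h \<sigma>" and hH: "\<forall>i\<in>I. h i \<in> H"
    and pa: "product_action I \<Delta> h \<sigma>"
    using wreath_paE[OF assms(4)] by blast
  obtain i where i: "i \<in> I"
    using assms(2) by blast
  obtain m where period: "0 < m" "(\<sigma> ^^ m) i = i"
    using Bij_periodic[OF assms(1) product_action.perm[OF pa] i] .
  let ?k = "cycle_prod h \<sigma> i (least_power \<sigma> i)"
  have "quasi_semiregular \<Delta> ?k"
    using product_action.quasi_semiregular_cycle_prod[OF pa] assms(5) g i period by blast
  then have "quasi_semiregular \<Delta> (restrict ?k \<Delta>)"
    using product_action.cycle_prod_mem[OF pa i] by (rule quasi_semiregular_restrict[rotated])
  moreover have "restrict ?k \<Delta> \<in> H"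
    using hH product_action.perm_funpow_mem[OF pa i]
    by (intro restrict_cycle_prod_in_subgroup[OF assms(3)]) blast
  ultimately show ?thesis ..
qed

lemma quasi_semiregular_prime_order_in_base_group:
  assumes "subgroup H (BijGroup \<Delta>)" "g \<in> wreath_pa I \<Delta> H" "g \<in> Bij (PiE I (\<lambda>_. \<Delta>))"
    and "quasi_semiregular (PiE I (\<lambda>_. \<Delta>)) g"
    and "Factorial_Ring.prime (group.ord (BijGroup (PiE I (\<lambda>_. \<Delta>))) g)"
  shows "g \<in> base_group I \<Delta> H"
proof -
  let ?\<Omega> = "PiE I (\<lambda>_. \<Delta>)"
  interpret Sym: group "BijGroup ?\<Omega>" by (rule group_BijGroup)
  have "H \<subseteq> Bij \<Delta>"
    using subgroup.subset[OF assms(1)] by (simp only: carrier_BijGroup)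
  then obtain h \<sigma> where g: "g = pa_perm I \<Delta> h \<sigma>" and hH: "\<forall>i\<in>I. h i \<in> H"
    and pa: "product_action I \<Delta> h \<sigma>"
    using wreath_paE[OF assms(2)] by blast
  obtain a where fixed: "{b \<in> ?\<Omega>. g b = b} = {a}"
    using quasi_semiregular_fixed_points[OF assms(4)] .
  have "g \<noteq> \<one>\<^bsub>BijGroup ?\<Omega>\<^esub>"
    using assms(5) Sym.ord_eq_1[of g] assms(3) by (auto simp: carrier_BijGroup)
  then have "g \<noteq> (\<lambda>w\<in>?\<Omega>. w)"
    by (simp add: one_BijGroup)
  then have "\<sigma> = (\<lambda>i\<in>I. i)"
    using product_action.prime_order_perm_eq_id[OF pa, of a] fixed assms(5)
      funpow_ord_BijGroup[OF assms(3)] g by blast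
  then show ?thesis
    using g hH by (auto simp: base_group_def)
qed

theorem corollary5p3:
  fixes I :: "'i set" and \<Delta> :: "'a set"
    and G :: "(('i \<Rightarrow> 'a) \<Rightarrow> ('i \<Rightarrow> 'a)) set" and H :: "('a \<Rightarrow> 'a) set"
  assumes "PA_type I \<Delta> G"
    and "subgroup H (BijGroup \<Delta>)"
    and "G \<subseteq> wreath_pa I \<Delta> H"
    and "\<exists>g\<in>G. quasi_semiregular (PiE I (\<lambda>_. \<Delta>)) g"
  shows "(\<exists>h\<in>H. quasi_semiregular \<Delta> h) \<and>
         (\<forall>g\<in>G. quasi_semiregular (PiE I (\<lambda>_. \<Delta>)) g \<and>
                 Factorial_Ring.prime (group.ord (BijGroup (PiE I (\<lambda>_. \<Delta>))) g)
                 \<longrightarrow> g \<in> base_group I \<Delta> H)"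
proof -
  have I: "finite I" "I \<noteq> {}" and "subgroup G (BijGroup (PiE I (\<lambda>_. \<Delta>)))"
    using assms(1) by (auto simp: PA_type_def)
  then have G: "G \<subseteq> Bij (PiE I (\<lambda>_. \<Delta>))"
    by (metis subgroup.subset carrier_BijGroup)
  obtain g where g: "g \<in> G" "quasi_semiregular (PiE I (\<lambda>_. \<Delta>)) g"
    using assms(4) ..
  have "\<exists>h\<in>H. quasi_semiregular \<Delta> h"
    using wreath_pa_quasi_semiregular_imp_ex_quasi_semiregular[OF I assms(2) _ g(2)] g(1) assms(3)
    by blast
  moreover have "g \<in> base_group I \<Delta> H"
    if "g \<in> G" "quasi_semiregular (PiE I (\<lambda>_. \<Delta>)) g"
      "Factorial_Ring.prime (group.ord (BijGroup (PiE I (\<lambda>_. \<Delta>))) g)" for g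
    using quasi_semiregular_prime_order_in_base_group[OF assms(2) _ _ that(2,3)]
      that(1) assms(3) G by blast
  ultimately show ?thesis
    by blast
qed

end
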